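(* Let $t \geq 3$ be an integer and let $G$ be a finite, simple, connected graph that does not contain the path $P_t$ on $t$ vertices as an induced subgraph. Then in the game of cops and robbers on $G$, $t-2$ cops have a strategy that captures the robber in at most $t-1$ moves.
   Context: The game of cops and robbers on a finite simple graph $G$ with $k$ cops and one robber: first each cop chooses a starting vertex, then the robber chooses a starting vertex; thereafter the players alternate turns, starting with the cops. On the cops' turn, each cop either stays at its vertex or moves to an adjacent vertex; on the robber's turn, the robber either stays at his vertex or moves to an adjacent vertex. The cops capture the robber (and win) if at some point a cop occupies the same vertex as the robber. A "move" counts one turn of the cop player (the initial placement of the cops counting as the first move). $P_t$ denotes the path graph on $t$ vertices, and "induced subgraph" has its usual meaning. *)

theory Defs
  imports Main
begin

definition simple_graph :: "'a set \<Rightarrow> ('a \<Rightarrow> 'a \<Rightarrow> bool) \<Rightarrow> bool" where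
  "simple_graph V E \<longleftrightarrow> finite V \<and> (\<forall>u v. E u v \<longrightarrow> u \<in> V \<and> v \<in> V)
     \<and> (\<forall>u v. E u v \<longrightarrow> E v u) \<and> (\<forall>v. \<not> E v v)"

definition connected_graph :: "'a set \<Rightarrow> ('a \<Rightarrow> 'a \<Rightarrow> bool) \<Rightarrow> bool" where
  "connected_graph V E \<longleftrightarrow> V \<noteq> {} \<and> (\<forall>u\<in>V. \<forall>v\<in>V. E\<^sup>*\<^sup>* u v)"

definition has_induced_path :: "'a set \<Rightarrow> ('a \<Rightarrow> 'a \<Rightarrow> bool) \<Rightarrow> nat \<Rightarrow> bool" where
  "has_induced_path V E t \<longleftrightarrow> (\<exists>f :: nat \<Rightarrow> 'a. inj_on f {..<t} \<and> (\<forall>i<t. f i \<in> V) \<and>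
      (\<forall>i<t. \<forall>j<t. E (f i) (f j) \<longleftrightarrow> (i = j + 1 \<or> j = i + 1)))"

definition captured :: "nat \<Rightarrow> (nat \<Rightarrow> 'a) \<Rightarrow> 'a \<Rightarrow> bool" where
  "captured k C r \<longleftrightarrow> (\<exists>i<k. C i = r)"

definition cop_step :: "('a \<Rightarrow> 'a \<Rightarrow> bool) \<Rightarrow> nat \<Rightarrow> (nat \<Rightarrow> 'a) \<Rightarrow> (nat \<Rightarrow> 'a) \<Rightarrow> bool" where
  "cop_step E k C C' \<longleftrightarrow> (\<forall>i<k. C' i = C i \<or> E (C i) (C' i))"

text \<open>cops_win E k n C r: cops at C, robber at r, cops to move; the cops can force
  capture using at most n further cop moves (the robber moves after each cop move).\<close>
fun cops_win :: "('a \<Rightarrow> 'a \<Rightarrow> bool) \<Rightarrow> nat \<Rightarrow> nat \<Rightarrow> (nat \<Rightarrow> 'a) \<Rightarrow> 'a \<Rightarrow> bool" where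
  "cops_win E k 0 C r \<longleftrightarrow> captured k C r"
| "cops_win E k (Suc n) C r \<longleftrightarrow> captured k C r \<or>
     (\<exists>C'. cop_step E k C C' \<and>
        (captured k C' r \<or> (\<forall>r'. (r' = r \<or> E r r') \<longrightarrow> cops_win E k n C' r')))"

text \<open>k cops capture the robber in at most m moves, where the initial placement of the
  cops counts as the first move (so m \<ge> 1 is needed).\<close>
definition capture_within :: "'a set \<Rightarrow> ('a \<Rightarrow> 'a \<Rightarrow> bool) \<Rightarrow> nat \<Rightarrow> nat \<Rightarrow> bool" where
  "capture_within V E k m \<longleftrightarrow> 1 \<le> m \<and>
     (\<exists>C0. (\<forall>i<k. C0 i \<in> V) \<and> (\<forall>r0\<in>V. cops_win E k (m - 1) C0 r0))"

end

theory Submission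
  imports Defs
begin

text \<open>The cops occupy an induced path p_0 ... p_l, cop j standing on p_(min j l). Unless the
  robber is in the closed neighbourhood N[P] of the path, and is caught on the next move, he lies
  in a component of G - N[P] that is reached from p_l through a neighbour w of p_l not adjacent to
  p_0 ... p_(l-1). The surplus cops step from p_l to w, extending the induced path, and this
  invariant survives the robber's move. After t - 3 extensions the path has t - 2 vertices, and a
  robber outside its closed neighbourhood would yield an induced path p_0 ... p_(t-3) w d on t
  vertices.\<close>

definition dominated :: "('a \<Rightarrow> 'a \<Rightarrow> bool) \<Rightarrow> 'a set \<Rightarrow> 'a \<Rightarrow> bool" where
  "dominated E S x \<longleftrightarrow> (\<exists>s\<in>S. s = x \<or> E s x)"

definition undominated_edge :: "('a \<Rightarrow> 'a \<Rightarrow> bool) \<Rightarrow> 'a set \<Rightarrow> 'a \<Rightarrow> 'a \<Rightarrow> bool" where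
  "undominated_edge E S u v \<longleftrightarrow> E u v \<and> \<not> dominated E S u \<and> \<not> dominated E S v"

definition induced_path :: "'a set \<Rightarrow> ('a \<Rightarrow> 'a \<Rightarrow> bool) \<Rightarrow> 'a list \<Rightarrow> bool" where
  "induced_path V E xs \<longleftrightarrow> distinct xs \<and> set xs \<subseteq> V \<and>
     (\<forall>j<length xs. \<forall>l<length xs. E (xs!j) (xs!l) \<longleftrightarrow> (j = l + 1 \<or> l = j + 1))"

definition robber_confined :: "'a set \<Rightarrow> ('a \<Rightarrow> 'a \<Rightarrow> bool) \<Rightarrow> 'a list \<Rightarrow> 'a \<Rightarrow> bool" where
  "robber_confined V E P r \<longleftrightarrow> induced_path V E P \<and> P \<noteq> [] \<and> r \<in> V \<and>
     (dominated E (set P) r \<or>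
      (\<exists>w d. E (last P) w \<and> \<not> dominated E (set (butlast P)) w \<and> E w d
         \<and> \<not> dominated E (set P) d \<and> (undominated_edge E (set P))\<^sup>*\<^sup>* d r))"

definition cops_on_path :: "'a list \<Rightarrow> nat \<Rightarrow> 'a" where
  "cops_on_path P j = P ! min j (length P - 1)"

lemma dominated_insert [simp]:
  "dominated E (insert a S) x \<longleftrightarrow> a = x \<or> E a x \<or> dominated E S x"
  by (auto simp: dominated_def)

lemma dominated_empty [simp]: "\<not> dominated E {} x"
  by (simp add: dominated_def)

lemma rtranclp_last_entry:
  assumes "R\<^sup>*\<^sup>* a b" and "\<not> Q a" and "Q b"
  shows "\<exists>x y. R x y \<and> \<not> Q x \<and> Q y \<and> (\<lambda>u v. R u v \<and> Q u \<and> Q v)\<^sup>*\<^sup>* y b"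
  using assms
proof (induction rule: rtranclp_induct)
  case base
  then show ?case by simp
next
  case (step b c)
  show ?case
  proof (cases "Q b")
    case True
    with step obtain x y where "R x y" "\<not> Q x" "Q y" "(\<lambda>u v. R u v \<and> Q u \<and> Q v)\<^sup>*\<^sup>* y b"
      by blast
    with step.hyps(2) step.prems(2) True show ?thesis
      by (metis (mono_tags, lifting) rtranclp.rtrancl_into_rtrancl)
  next
    case False
    then show ?thesis using step by blast
  qed
qed

lemma induced_path_snoc:
  assumes sg: "simple_graph V E" and P: "induced_path V E xs" "xs \<noteq> []"
    and x: "E (last xs) x" "\<not> dominated E (set (butlast xs)) x"
  shows "induced_path V E (xs @ [x])"
proof -
  have sym: "\<And>u v. E u v \<Longrightarrow> E v u" and irr: "\<And>v. \<not> E v v" and xV: "x \<in> V"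
    using sg x(1) unfolding simple_graph_def by blast+
  define n where "n = length xs"
  have n: "n \<ge> 1" "last xs = xs ! (n - 1)"
    using P(2) by (auto simp: n_def last_conv_nth Suc_le_eq)
  have early: "\<not> E (xs!j) x \<and> xs!j \<noteq> x" if "j < n - 1" for j
  proof -
    have "xs ! j \<in> set (butlast xs)"
      using that by (metis n_def length_butlast nth_butlast nth_mem)
    then show ?thesis using x(2) by (auto simp: dominated_def)
  qed
  have adj: "E (xs!j) x \<longleftrightarrow> j = n - 1" if "j < n" for j
    using that early[of j] x(1) n(2) by (cases "j = n - 1") auto
  have "x \<notin> set xs"
  proof
    assume "x \<in> set xs"
    then obtain j where "j < n" "xs ! j = x" by (auto simp: n_def in_set_conv_nth)
    then show False using adj[of j] early[of j] x(1) n(2) irr by (cases "j = n - 1") auto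
  qed
  moreover have "E ((xs@[x])!j) ((xs@[x])!l) \<longleftrightarrow> (j = l + 1 \<or> l = j + 1)"
    if jl: "j < n + 1" "l < n + 1" for j l
  proof -
    consider "j < n" "l < n" | "j < n" "l = n" | "j = n" "l < n" | "j = n" "l = n"
      using jl by (metis Suc_eq_plus1 less_SucE)
    then show ?thesis
    proof cases
      case 1
      then show ?thesis using P(1) by (simp add: induced_path_def nth_append n_def)
    next
      case 2
      then show ?thesis using adj[of j] n(1) by (auto simp: nth_append n_def)
    next
      case 3
      then show ?thesis using adj[of l] n(1) sym by (auto simp: nth_append n_def)
    next
      case 4
      then show ?thesis using irr by (simp add: nth_append n_def)
    qed
  qed
  ultimately show ?thesis using P(1) xV by (simp add: induced_path_def n_def)
qed

lemma induced_path_imp_has_induced_path: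
  assumes "induced_path V E xs"
  shows "has_induced_path V E (length xs)"
  unfolding has_induced_path_def
proof (intro exI conjI)
  show "inj_on (nth xs) {..<length xs}"
    using assms by (simp add: induced_path_def inj_on_nth)
  show "\<forall>i<length xs. xs ! i \<in> V"
    using assms by (auto simp: induced_path_def)
qed (use assms in \<open>simp add: induced_path_def\<close>)

lemma cops_win_dominated:
  assumes "dominated E (set P) r" and "length P \<le> k"
  shows "cops_win E k (Suc n) (cops_on_path P) r"
proof -
  obtain j where j: "j < length P" "P ! j = r \<or> E (P ! j) r"
    using assms(1) by (auto simp: dominated_def in_set_conv_nth)
  then have cop_j: "cops_on_path P j = P ! j" by (simp add: cops_on_path_def)
  let ?C = "(cops_on_path P)(j := r)"
  have "cop_step E k (cops_on_path P) ?C" and "captured k ?C r"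
    using j cop_j assms(2) by (auto simp: cop_step_def captured_def)
  then show ?thesis by auto
qed

lemma cop_step_cops_on_path_snoc:
  assumes "P \<noteq> []" and "E (last P) w"
  shows "cop_step E k (cops_on_path P) (cops_on_path (P @ [w]))"
  unfolding cop_step_def
proof (intro allI impI)
  fix j
  show "cops_on_path (P @ [w]) j = cops_on_path P j
    \<or> E (cops_on_path P j) (cops_on_path (P @ [w]) j)"
  proof (cases "j < length P")
    case True
    then show ?thesis by (simp add: cops_on_path_def nth_append)
  next
    case False
    then have "min j (length P - 1) = length P - 1" "min j (length (P @ [w]) - 1) = length P"
      by auto
    then have "cops_on_path P j = last P" "cops_on_path (P @ [w]) j = w"
      using assms(1) by (simp_all add: cops_on_path_def last_conv_nth)
    then show ?thesis using assms(2) by simp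
  qed
qed

lemma robber_confined_initial:
  assumes "connected_graph V E" and "v \<in> V" and "r \<in> V" and "simple_graph V E"
  shows "robber_confined V E [v] r"
proof -
  have irr: "\<And>u. \<not> E u u" using assms(4) by (simp add: simple_graph_def)
  have "induced_path V E [v]" using assms(2) irr by (simp add: induced_path_def)
  moreover have "\<exists>w d. E v w \<and> E w d \<and> \<not> dominated E {v} d \<and> (undominated_edge E {v})\<^sup>*\<^sup>* d r"
    if r: "\<not> dominated E {v} r"
  proof -
    have "E\<^sup>*\<^sup>* v r" using assms(1-3) by (simp add: connected_graph_def)
    then obtain x y where "E x y" "dominated E {v} x" "\<not> dominated E {v} y"
        "(\<lambda>u w. E u w \<and> \<not> dominated E {v} u \<and> \<not> dominated E {v} w)\<^sup>*\<^sup>* y r"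
      using rtranclp_last_entry[of E v r "\<lambda>u. \<not> dominated E {v} u"] r by auto
    moreover from this(4) have "(undominated_edge E {v})\<^sup>*\<^sup>* y r"
      unfolding undominated_edge_def by simp
    ultimately show ?thesis by auto
  qed
  ultimately show ?thesis using assms(3) by (auto simp: robber_confined_def)
qed

text \<open>The robber's route from d to r' avoids N[P] and starts in N(w); its last vertex in N(w)
  becomes the new w, and the next vertex the new d.\<close>

lemma robber_confined_snoc:
  assumes sg: "simple_graph V E" and P: "induced_path V E P" "P \<noteq> []"
    and wd: "E (last P) w" "\<not> dominated E (set (butlast P)) w" "E w d"
      "(undominated_edge E (set P))\<^sup>*\<^sup>* d r"
    and r: "\<not> dominated E (set P) r" and r': "r' = r \<or> E r r'" "r' \<in> V"
  shows "robber_confined V E (P @ [w]) r'"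
proof -
  let ?P' = "P @ [w]"
  have path': "induced_path V E ?P'" using induced_path_snoc[OF sg P wd(1,2)] .
  have "\<exists>w' d'. E w w' \<and> \<not> dominated E (set P) w' \<and> E w' d'
      \<and> \<not> dominated E (set ?P') d' \<and> (undominated_edge E (set ?P'))\<^sup>*\<^sup>* d' r'"
    if r'_free: "\<not> dominated E (set ?P') r'"
  proof -
    have "(undominated_edge E (set P))\<^sup>*\<^sup>* d r'"
      using r' wd(4) r r'_free
      by (auto simp: undominated_edge_def intro: rtranclp.rtrancl_into_rtrancl)
    moreover have "dominated E (set ?P') d" using wd(3) by simp
    ultimately obtain x y where xy: "undominated_edge E (set P) x y" "dominated E (set ?P') x"
        "\<not> dominated E (set ?P') y"
        "(\<lambda>u v. undominated_edge E (set P) u v \<and> \<not> dominated E (set ?P') u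
            \<and> \<not> dominated E (set ?P') v)\<^sup>*\<^sup>* y r'"
      using rtranclp_last_entry[of _ d r' "\<lambda>u. \<not> dominated E (set ?P') u"] r'_free by blast
    have "x \<noteq> w" using xy(1) wd(1) P(2) by (auto simp: undominated_edge_def dominated_def)
    then have "E w x" using xy(1,2) by (auto simp: undominated_edge_def)
    moreover have "(undominated_edge E (set ?P'))\<^sup>*\<^sup>* y r'"
      using xy(4) by (rule rtranclp_mono[THEN predicate2D, rotated])
        (auto simp: undominated_edge_def)
    ultimately show ?thesis using xy(1,3) by (auto simp: undominated_edge_def)
  qed
  then show ?thesis using path' r'(2) by (auto simp: robber_confined_def)
qed

lemma robber_confined_cops_win:
  assumes sg: "simple_graph V E" and no_path: "\<not> has_induced_path V E (k + 2)"
  shows "robber_confined V E P r \<Longrightarrow> length P + m = k \<Longrightarrow>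
    cops_win E k (Suc m) (cops_on_path P) r"
proof (induction m arbitrary: P r)
  case m: 0
  show ?case
  proof (cases "dominated E (set P) r")
    case True
    then show ?thesis by (rule cops_win_dominated) (use m.prems(2) in simp)
  next
    case False
    with m.prems(1) obtain w d where P: "induced_path V E P" "P \<noteq> []" and
      wd: "E (last P) w" "\<not> dominated E (set (butlast P)) w" "E w d" "\<not> dominated E (set P) d"
      by (auto simp: robber_confined_def)
    have "induced_path V E (P @ [w])" using induced_path_snoc[OF sg P wd(1,2)] .
    then have "induced_path V E ((P @ [w]) @ [d])"
      by (rule induced_path_snoc[OF sg]) (use wd(3,4) in simp_all)
    then show ?thesis
      using induced_path_imp_has_induced_path no_path m.prems(2) by fastforce
  qed
next
  case (Suc m)
  show ?case
  proof (cases "dominated E (set P) r")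
    case True
    then show ?thesis by (rule cops_win_dominated) (use Suc.prems(2) in simp)
  next
    case r: False
    with Suc.prems(1) obtain w d where P: "induced_path V E P" "P \<noteq> []" "r \<in> V" and
      wd: "E (last P) w" "\<not> dominated E (set (butlast P)) w" "E w d" "\<not> dominated E (set P) d"
        "(undominated_edge E (set P))\<^sup>*\<^sup>* d r"
      by (auto simp: robber_confined_def)
    have "cops_win E k (Suc m) (cops_on_path (P @ [w])) r'" if "r' = r \<or> E r r'" for r'
    proof -
      have "r' \<in> V" using that P(3) sg by (auto simp: simple_graph_def)
      then have "robber_confined V E (P @ [w]) r'"
        using robber_confined_snoc[OF sg P(1,2) wd(1,2,3,5) r] that by blast
      then show ?thesis using Suc.IH Suc.prems(2) by simp
    qed
    moreover have "cop_step E k (cops_on_path P) (cops_on_path (P @ [w]))"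
      using P(2) wd(1) by (rule cop_step_cops_on_path_snoc)
    ultimately show ?thesis unfolding cops_win.simps(2)[of E k "Suc m"] by blast
  qed
qed

theorem mainTheorem1:
  fixes V :: "'a set" and E :: "'a \<Rightarrow> 'a \<Rightarrow> bool" and t :: nat
  assumes "t \<ge> 3"
    and "simple_graph V E"
    and "connected_graph V E"
    and "\<not> has_induced_path V E t"
  shows "capture_within V E (t - 2) (t - 1)"
proof -
  obtain v where v: "v \<in> V" using assms(3) by (auto simp: connected_graph_def)
  have "cops_win E (t - 2) (Suc (t - 3)) (cops_on_path [v]) r" if "r \<in> V" for r
  proof (rule robber_confined_cops_win)
    have "t - 2 + 2 = t" using assms(1) by simp
    then show "\<not> has_induced_path V E (t - 2 + 2)" using assms(4) by metis
    show "length [v] + (t - 3) = t - 2" using assms(1) by simp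
  qed (use robber_confined_initial[OF assms(3) v that] assms(2) in auto)
  moreover have "cops_on_path [v] = (\<lambda>_. v)" by (simp add: cops_on_path_def fun_eq_iff)
  moreover have "Suc (t - 3) = t - 1 - 1" using assms(1) by simp
  ultimately show ?thesis using assms(1) v by (auto simp: capture_within_def)
qed

end
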